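(* Let $h$ be a non-degenerate symmetric $(0,2)$-tensor field and let $J_1,J_2$ be $h$-symmetric $(1,1)$-tensor fields on a smooth manifold $M$ such that $J_1J_2=J_2J_1$ and $(J_1-J_2)^2=0$. Define endomorphisms of $TM\oplus T^*M$ by $\hat J_-(X+\eta)=J_1X-(J_1^2+I)h^{-1}(\eta)+h(X)-J_1^*\eta$ and $\hat J_+(X+\eta)=J_2X-(J_2^2-I)h^{-1}(\eta)+h(X)-J_2^*\eta$. Then $\hat J_-^2=-I$, $\hat J_+^2=I$ and $\hat J_-\hat J_+=-\hat J_+\hat J_-$, so that $(\hat J_-,\hat J_+,\hat J_-\hat J_+)$ is a generalized almost para-quaternionic structure on $M$.
   Context: $h$ is viewed as the isomorphism $TM\to T^*M$, $X\mapsto h(X,\cdot)$, with inverse $h^{-1}$; $(J^*\eta)(X)=\eta(JX)$; $J$ is $h$-symmetric if $h(JX,Y)=h(X,JY)$. *)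

theory Defs
  imports "HOL-Analysis.Analysis"
begin

text \<open>Pointwise (fibrewise) setting: a tangent space is a finite-dimensional real
vector space 'a; covectors are linear functionals 'a \<Rightarrow> real; an element X + eta of
T_pM \<oplus> T_p^*M is a pair (X, eta) with eta linear.\<close>

definition nondegenerate :: "('a::real_vector \<Rightarrow> 'a \<Rightarrow> real) \<Rightarrow> bool" where
  "nondegenerate h \<longleftrightarrow> (\<forall>X. (\<forall>Y. h X Y = 0) \<longrightarrow> X = 0)"

definition h_symmetric :: "('a \<Rightarrow> 'a \<Rightarrow> real) \<Rightarrow> ('a \<Rightarrow> 'a) \<Rightarrow> bool" where
  "h_symmetric h J \<longleftrightarrow> (\<forall>X Y. h (J X) Y = h X (J Y))"

definition h_inv :: "('a \<Rightarrow> 'a \<Rightarrow> real) \<Rightarrow> ('a \<Rightarrow> real) \<Rightarrow> 'a" where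
  "h_inv h \<eta> = (THE X. h X = \<eta>)"

definition dual_map :: "('a \<Rightarrow> 'a) \<Rightarrow> ('a \<Rightarrow> real) \<Rightarrow> ('a \<Rightarrow> real)" where
  "dual_map J \<eta> = (\<lambda>X. \<eta> (J X))"

definition J_minus :: "('a::real_vector \<Rightarrow> 'a \<Rightarrow> real) \<Rightarrow> ('a \<Rightarrow> 'a)
    \<Rightarrow> 'a \<times> ('a \<Rightarrow> real) \<Rightarrow> 'a \<times> ('a \<Rightarrow> real)" where
  "J_minus h J1 p = (let X = fst p; \<eta> = snd p; Y = h_inv h \<eta> in
     (J1 X - (J1 (J1 Y) + Y), (\<lambda>Z. h X Z - dual_map J1 \<eta> Z)))"

definition J_plus :: "('a::real_vector \<Rightarrow> 'a \<Rightarrow> real) \<Rightarrow> ('a \<Rightarrow> 'a)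
    \<Rightarrow> 'a \<times> ('a \<Rightarrow> real) \<Rightarrow> 'a \<times> ('a \<Rightarrow> real)" where
  "J_plus h J2 p = (let X = fst p; \<eta> = snd p; Y = h_inv h \<eta> in
     (J2 X - (J2 (J2 Y) - Y), (\<lambda>Z. h X Z - dual_map J2 \<eta> Z)))"

definition gen_almost_para_quaternionic ::
  "('a::real_vector \<times> ('a \<Rightarrow> real) \<Rightarrow> 'a \<times> ('a \<Rightarrow> real)) \<Rightarrow>
   ('a \<times> ('a \<Rightarrow> real) \<Rightarrow> 'a \<times> ('a \<Rightarrow> real)) \<Rightarrow>
   ('a \<times> ('a \<Rightarrow> real) \<Rightarrow> 'a \<times> ('a \<Rightarrow> real)) \<Rightarrow> bool" where
  "gen_almost_para_quaternionic J K L \<longleftrightarrow>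
     (\<forall>X \<eta>. linear \<eta> \<longrightarrow>
        J (J (X, \<eta>)) = (- X, - \<eta>) \<and> K (K (X, \<eta>)) = (X, \<eta>) \<and> L (L (X, \<eta>)) = (X, \<eta>) \<and>
        J (K (X, \<eta>)) = L (X, \<eta>) \<and> K (J (X, \<eta>)) = (- fst (L (X, \<eta>)), - snd (L (X, \<eta>))))"

end

theory Submission
  imports Defs
begin

text \<open>On pairs (X, h Y) both operators are given by polynomials in J1 resp. J2:
  \<open>J_minus h J1 (X, h Y) = (J1 X - (J1\<^sup>2 + I) Y, h (X - J1 Y))\<close>, and similarly for
  \<open>J_plus\<close> with \<open>J2\<^sup>2 - I\<close>. Since h is non-degenerate and the tangent space is
  finite-dimensional, every covector is of the form h Y, so all identities reduce to
  identities between such polynomials. The squares come out as -I and I for any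
  J1, J2; the anticommutator of the two operators is \<open>-(J1 - J2)\<^sup>2\<close> in both
  components once J1 and J2 commute, so it vanishes by the nilpotency hypothesis.\<close>

lemma linear_functional_eq_inner:
  fixes f :: "'a::euclidean_space \<Rightarrow> real"
  assumes "linear f"
  shows "f Z = (\<Sum>b\<in>Basis. f b *\<^sub>R b) \<bullet> Z"
proof -
  have "f Z = f (\<Sum>b\<in>Basis. (Z \<bullet> b) *\<^sub>R b)"
    by (simp add: euclidean_representation)
  also have "\<dots> = (\<Sum>b\<in>Basis. (Z \<bullet> b) * f b)"
    by (simp add: linear_sum[OF assms] linear_scale[OF assms])
  also have "\<dots> = (\<Sum>b\<in>Basis. f b *\<^sub>R b) \<bullet> Z"
    unfolding inner_sum_left inner_scaleR_left by (rule sum.cong) (simp_all add: inner_commute)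
  finally show ?thesis .
qed

lemma nondegenerate_bilinear_surj:
  fixes h :: "'a::euclidean_space \<Rightarrow> 'a \<Rightarrow> real"
  assumes "bilinear h" "nondegenerate h" "linear \<eta>"
  shows "\<exists>Y. \<eta> = h Y"
proof -
  \<comment> \<open>M X represents h X via the inner product; by non-degeneracy M is injective,
    hence surjective in finite dimension.\<close>
  define M where "M X = (\<Sum>b\<in>Basis. h X b *\<^sub>R b)" for X
  have linear_right: "linear (h X)" for X
    using assms(1) by (simp add: bilinear_def)
  have linear_left: "linear (\<lambda>X. h X Z)" for Z
    using assms(1) by (simp add: bilinear_def)
  have h_eq_M: "h X Z = M X \<bullet> Z" for X Z
    unfolding M_def by (rule linear_functional_eq_inner[OF linear_right])
  have "linear M"
    unfolding M_def linear_iff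
    by (simp add: linear_add[OF linear_left] linear_scale[OF linear_left] sum.distrib
        scaleR_add_left scaleR_sum_right)
  moreover have "inj M"
  proof (rule linear_injective_0[OF \<open>linear M\<close>, THEN iffD2], intro allI impI)
    fix X assume "M X = 0"
    then show "X = 0"
      using assms(2) by (simp add: h_eq_M nondegenerate_def)
  qed
  ultimately have "surj M"
    by (simp add: linear_injective_imp_surjective)
  then obtain Y where Y: "M Y = (\<Sum>b\<in>Basis. \<eta> b *\<^sub>R b)"
    by (metis surjD)
  have "h Y Z = \<eta> Z" for Z
    using h_eq_M[of Y Z] Y linear_functional_eq_inner[OF assms(3), of Z] by simp
  then show ?thesis
    by (metis ext)
qed

lemma h_inv_apply:
  assumes "bilinear h" "nondegenerate h"
  shows "h_inv h (h Y) = Y"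
  unfolding h_inv_def
proof (rule the_equality)
  fix X assume "h X = h Y"
  then have "h (X - Y) Z = 0" for Z
    using assms(1) by (simp add: bilinear_lsub)
  then show "X = Y"
    using assms(2) unfolding nondegenerate_def by (metis eq_iff_diff_eq_0)
qed simp

lemma bilinear_left_uminus: "bilinear h \<Longrightarrow> h (- X) = - h X"
  by (simp add: bilinear_lneg fun_eq_iff)

lemma J_minus_h:
  assumes "bilinear h" "nondegenerate h" "h_symmetric h J"
  shows "J_minus h J (X, h Y) = (J X - (J (J Y) + Y), h (X - J Y))"
  using assms
  by (simp add: J_minus_def h_inv_apply dual_map_def h_symmetric_def bilinear_lsub fun_eq_iff)

lemma J_plus_h:
  assumes "bilinear h" "nondegenerate h" "h_symmetric h J"
  shows "J_plus h J (X, h Y) = (J X - (J (J Y) - Y), h (X - J Y))"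
  using assms
  by (simp add: J_plus_def h_inv_apply dual_map_def h_symmetric_def bilinear_lsub fun_eq_iff)

lemma J_minus_squared:
  assumes "bilinear h" "nondegenerate h" "h_symmetric h J" "linear J"
  shows "J_minus h J (J_minus h J (X, h Y)) = - (X, h Y)"
  using assms
  by (simp add: J_minus_h linear_diff linear_add bilinear_left_uminus[symmetric])

lemma J_plus_squared:
  assumes "bilinear h" "nondegenerate h" "h_symmetric h J" "linear J"
  shows "J_plus h J (J_plus h J (X, h Y)) = (X, h Y)"
  using assms
  by (simp add: J_plus_h linear_diff)

lemma J_minus_J_plus_anticommute:
  assumes "bilinear h" "nondegenerate h"
    and "h_symmetric h J1" "h_symmetric h J2" "linear J1" "linear J2"
    and commute: "\<And>X. J1 (J2 X) = J2 (J1 X)"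
    and nilpotent: "\<And>X. J1 (J1 X - J2 X) - J2 (J1 X - J2 X) = 0"
  shows "J_minus h J1 (J_plus h J2 (X, h Y)) = - J_plus h J2 (J_minus h J1 (X, h Y))"
proof -
  note linear_J = linear_add[OF assms(5)] linear_diff[OF assms(5)]
    linear_add[OF assms(6)] linear_diff[OF assms(6)] linear_scale[OF assms(6)]
  have J1_squared: "J1 (J1 Z) = 2 *\<^sub>R J2 (J1 Z) - J2 (J2 Z)" for Z
    using nilpotent[of Z] commute[of Z] by (simp add: linear_J algebra_simps scaleR_2)
  have fst_eq: "J1 (J2 X - (J2 (J2 Y) - Y)) - (J1 (J1 (X - J2 Y)) + (X - J2 Y))
      = - (J2 (J1 X - (J1 (J1 Y) + Y)) - (J2 (J2 (X - J1 Y)) - (X - J1 Y)))"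
    by (simp add: linear_J commute J1_squared algebra_simps scaleR_2)
  have snd_eq: "J2 X - (J2 (J2 Y) - Y) - J1 (X - J2 Y) = - (J1 X - (J1 (J1 Y) + Y) - J2 (X - J1 Y))"
    by (simp add: linear_J commute J1_squared algebra_simps scaleR_2)
  show ?thesis
    unfolding J_plus_h[OF assms(1,2,4)] J_minus_h[OF assms(1,2,3)] fst_eq snd_eq
    by (simp only: uminus_Pair bilinear_left_uminus[OF assms(1)])
qed

lemma J_plus_J_minus_anticommute:
  assumes "bilinear h" "nondegenerate h"
    and "h_symmetric h J1" "h_symmetric h J2" "linear J1" "linear J2"
    and "\<And>X. J1 (J2 X) = J2 (J1 X)"
    and "\<And>X. J1 (J1 X - J2 X) - J2 (J1 X - J2 X) = 0"
  shows "J_plus h J2 (J_minus h J1 (X, h Y)) = - J_minus h J1 (J_plus h J2 (X, h Y))"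
  using J_minus_J_plus_anticommute[OF assms] by (simp add: prod_eq_iff fun_eq_iff)

lemma J_minus_uminus:
  assumes "bilinear h" "nondegenerate h" "h_symmetric h J" "linear J"
  shows "J_minus h J (- (X, h Y)) = - J_minus h J (X, h Y)"
proof -
  have "- X - J (- Y) = - (X - J Y)"
    using assms(4) by (simp add: linear_neg)
  then show ?thesis
    using assms
    by (simp only: uminus_Pair bilinear_left_uminus[symmetric] J_minus_h) (simp add: linear_neg)
qed

lemma J_minus_J_plus_squared:
  assumes "bilinear h" "nondegenerate h"
    and "h_symmetric h J1" "h_symmetric h J2" "linear J1" "linear J2"
    and "\<And>X. J1 (J2 X) = J2 (J1 X)"
    and "\<And>X. J1 (J1 X - J2 X) - J2 (J1 X - J2 X) = 0"
  shows "J_minus h J1 (J_plus h J2 (J_minus h J1 (J_plus h J2 (X, h Y)))) = (X, h Y)"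
  \<comment> \<open>formally from the squares and the anticommutation: (J_- J_+)^2 = - J_-^2 J_+^2\<close>
proof -
  obtain X' Y' where plus: "J_plus h J2 (X, h Y) = (X', h Y')"
    using J_plus_h[OF assms(1,2,4)] by blast
  obtain X'' Y'' where minus: "J_minus h J1 (X, h Y) = (X'', h Y'')"
    using J_minus_h[OF assms(1,2,3)] by blast
  have "J_plus h J2 (J_minus h J1 (X', h Y')) = - J_minus h J1 (J_plus h J2 (X', h Y'))"
    by (rule J_plus_J_minus_anticommute[OF assms])
  also have "\<dots> = - J_minus h J1 (X, h Y)"
    using J_plus_squared[OF assms(1,2,4,6), of X Y] by (simp add: plus)
  finally have "J_minus h J1 (J_plus h J2 (J_minus h J1 (X', h Y'))) = - J_minus h J1 (X'', h Y'')"
    using J_minus_uminus[OF assms(1,2,3,5)] by (simp add: minus)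
  also have "\<dots> = (X, h Y)"
    using J_minus_squared[OF assms(1,2,3,5), of X Y] by (simp add: minus fun_eq_iff)
  finally show ?thesis
    by (simp add: plus)
qed

theorem proposition3p1:
  fixes h :: "'a::euclidean_space \<Rightarrow> 'a \<Rightarrow> real"
    and J1 J2 :: "'a \<Rightarrow> 'a"
  assumes "bilinear h"
    and "\<And>X Y. h X Y = h Y X"
    and "nondegenerate h"
    and "linear J1" and "linear J2"
    and "h_symmetric h J1" and "h_symmetric h J2"
    and "\<And>X. J1 (J2 X) = J2 (J1 X)"
    and "\<And>X. J1 (J1 X - J2 X) - J2 (J1 X - J2 X) = 0"
  shows "(\<forall>X \<eta>. linear \<eta> \<longrightarrow>
            J_minus h J1 (J_minus h J1 (X, \<eta>)) = (- X, - \<eta>)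
          \<and> J_plus h J2 (J_plus h J2 (X, \<eta>)) = (X, \<eta>)
          \<and> J_minus h J1 (J_plus h J2 (X, \<eta>))
              = (- fst (J_plus h J2 (J_minus h J1 (X, \<eta>))),
                 - snd (J_plus h J2 (J_minus h J1 (X, \<eta>)))))
       \<and> gen_almost_para_quaternionic (J_minus h J1) (J_plus h J2)
            (J_minus h J1 \<circ> J_plus h J2)"
proof -
  note hyps = assms(1,3,6,7,4,5,8,9)
  have "J_minus h J1 (J_minus h J1 (X, \<eta>)) = - (X, \<eta>)
      \<and> J_plus h J2 (J_plus h J2 (X, \<eta>)) = (X, \<eta>)
      \<and> J_minus h J1 (J_plus h J2 (X, \<eta>)) = - J_plus h J2 (J_minus h J1 (X, \<eta>))
      \<and> J_plus h J2 (J_minus h J1 (X, \<eta>)) = - J_minus h J1 (J_plus h J2 (X, \<eta>))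
      \<and> J_minus h J1 (J_plus h J2 (J_minus h J1 (J_plus h J2 (X, \<eta>)))) = (X, \<eta>)"
    if "linear \<eta>" for X \<eta>
  proof -
    obtain Y where "\<eta> = h Y"
      using nondegenerate_bilinear_surj[OF assms(1,3) \<open>linear \<eta>\<close>] by blast
    then show ?thesis
      using J_minus_squared[OF assms(1,3,6,4)] J_plus_squared[OF assms(1,3,7,5)]
        J_minus_J_plus_anticommute[OF hyps] J_plus_J_minus_anticommute[OF hyps]
        J_minus_J_plus_squared[OF hyps]
      by blast
  qed
  then show ?thesis
    unfolding gen_almost_para_quaternionic_def comp_apply uminus_Pair[symmetric] prod.collapse
    by blast
qed
end
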